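(* Let $C$ be a binary linear self-dual code of length $n$ with exact weight enumerator $W$ and derivatives $W_{<t>}$. Then for every integer $t$ with $0\le t\le n-1$ and every $v\in F^{n-t-1}$, $$W_{<t>}[(1)\overline{v}]=(-1)^{wt(v)}\rho^{t}\,\Phi\big(W_{<t>}[(0)v]\big),$$ where $\overline{v}$ is the complement of $v$ (all coordinates flipped), $(0)v$ and $(1)\overline v$ denote prepending $0$, respectively $1$, and $\Phi$ is the nontrivial automorphism of $\mathbb{Q}(\sqrt2)$.
   Context: $F=\{0,1\}$ is the binary field. A binary linear self-dual code $C$ of length $n$ is a linear subspace of $F^n$ of dimension $n/2$ equal to its orthogonal complement under the standard dot product. The exact weight enumerator of $C$ is the vector $W\in\mathbb{Q}^{2^n}$ whose entries are labeled by the vectors of $F^n$ (in lexicographic order), with $W[v]=1$ if $v\in C$ and $W[v]=0$ otherwise. Let $\rho=\sqrt2-1$ and $\mu=-\sqrt2-1$; $\mathbb{Q}(\rho)=\mathbb{Q}(\sqrt2)$ and $\Phi:\mathbb{Q}(\rho)\to\mathbb{Q}(\rho)$ is the field automorphism with $\Phi(\rho)=\mu$ (equivalently $\Phi(\sqrt2)=-\sqrt2$). For $0\le t\le n$, the $t$-th derivative of $W$ is the vector $W_{<t>}$ of length $2^{n-t}$ with entries labeled by $v\in F^{n-t}$ given by $W_{<t>}[v]=\sum_{u\in F^t}\rho^{wt(u)}W[uv]$, where $wt(u)$ is the Hamming weight of $u$ and $uv$ is the concatenation of $u$ and $v$. *)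

theory Defs
  imports Complex_Main
begin

text \<open>Binary vectors of length n are bool lists of length n (True = 1).\<close>

definition bvecs :: "nat \<Rightarrow> bool list set" where
  "bvecs n = {v. length v = n}"

definition wt :: "bool list \<Rightarrow> nat" where
  "wt v = length (filter id v)"

definition xorv :: "bool list \<Rightarrow> bool list \<Rightarrow> bool list" where
  "xorv u v = map2 (\<noteq>) u v"

definition dotp :: "bool list \<Rightarrow> bool list \<Rightarrow> bool" where
  "dotp u v = odd (length (filter id (map2 (\<and>) u v)))"

definition linear_code :: "nat \<Rightarrow> bool list set \<Rightarrow> bool" where
  "linear_code n C \<longleftrightarrow> C \<subseteq> bvecs n \<and> replicate n False \<in> C \<and>
     (\<forall>u\<in>C. \<forall>v\<in>C. xorv u v \<in> C)"

definition dual_code :: "nat \<Rightarrow> bool list set \<Rightarrow> bool list set" where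
  "dual_code n C = {v \<in> bvecs n. \<forall>c\<in>C. \<not> dotp c v}"

definition self_dual_code :: "nat \<Rightarrow> bool list set \<Rightarrow> bool" where
  "self_dual_code n C \<longleftrightarrow> linear_code n C \<and> even n \<and> card C = 2 ^ (n div 2) \<and>
     C = dual_code n C"

definition rho :: real where "rho = sqrt 2 - 1"

text \<open>Field automorphism of Q(sqrt 2) with sqrt 2 \<mapsto> - sqrt 2 (elements represented as reals).\<close>
definition Phi :: "real \<Rightarrow> real" where
  "Phi x = (THE y. \<exists>a b :: rat. x = of_rat a + of_rat b * sqrt 2 \<and> y = of_rat a - of_rat b * sqrt 2)"

definition W :: "bool list set \<Rightarrow> bool list \<Rightarrow> real" where
  "W C v = (if v \<in> C then 1 else 0)"

text \<open>t-th derivative: entries labelled by v of length n - t.\<close>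
definition Wder :: "bool list set \<Rightarrow> nat \<Rightarrow> bool list \<Rightarrow> real" where
  "Wder C t v = (\<Sum>u\<in>bvecs t. rho ^ wt u * W C (u @ v))"

end

theory Submission
  imports Defs
begin

text \<open>
  A self-dual binary code contains only even-weight words, hence the all-ones word, so it is
  closed under complementation. Complementing the summation index in the derivative turns the
  weight \<open>rho ^ wt u\<close> into \<open>rho ^ (t - wt u)\<close>, which equals \<open>(-1) ^ wt u * rho ^ t * mu ^ wt u\<close>
  because \<open>rho * mu = -1\<close>; on codewords \<open>(-1) ^ wt u = (-1) ^ wt v\<close> by evenness. The remaining
  sum with weights \<open>mu ^ wt u\<close> is the conjugate under \<open>Phi\<close> of the sum with weights \<open>rho ^ wt u\<close>.
\<close>

lemma sqrt_2_not_rat: "sqrt 2 \<notin> \<rat>"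
proof
  assume "sqrt 2 \<in> \<rat>"
  moreover have "\<bar>sqrt 2\<bar> = sqrt 2" by simp
  ultimately obtain m n :: nat where n: "n \<noteq> 0" and e: "sqrt 2 = real m / real n"
     and cp: "coprime m n"
    by (metis Rats_abs_nat_div_natE)
  have "(real m / real n)^2 = 2" using e by (metis real_sqrt_pow2 zero_le_numeral)
  hence "real m ^2 = 2 * real n ^2" using n by (simp add: field_simps power_divide)
  hence mn: "m^2 = 2 * n^2" by (metis of_nat_eq_iff of_nat_mult of_nat_numeral of_nat_power)
  hence "even (m^2)" by simp
  hence "even m" by simp
  then obtain a where "m = 2*a" by blast
  with mn have "n^2 = 2*a^2" by (simp add: power_mult_distrib)
  hence "even (n^2)" by simp
  hence "even n" by simp
  with \<open>even m\<close> cp show False by fastforce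
qed

lemma of_rat_sqrt_2_eq_iff:
  "of_rat a + of_rat b * sqrt 2 = of_rat a' + of_rat b' * sqrt 2 \<longleftrightarrow> a = a' \<and> b = b'"
proof (intro iffI)
  assume eq: "of_rat a + of_rat b * sqrt 2 = of_rat a' + of_rat b' * sqrt 2"
  show "a = a' \<and> b = b'"
  proof (cases "b = b'")
    case False
    with eq have "sqrt 2 = of_rat ((a - a') / (b' - b))"
      by (simp add: of_rat_divide of_rat_diff field_simps)
    with sqrt_2_not_rat show ?thesis by (metis Rats_of_rat)
  qed (use eq in simp)
qed simp

definition sqrt2_conj :: "real \<Rightarrow> real \<Rightarrow> bool" where
  "sqrt2_conj x y \<longleftrightarrow> (\<exists>a b :: rat. x = of_rat a + of_rat b * sqrt 2 \<and> y = of_rat a - of_rat b * sqrt 2)"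

lemma Phi_eqI: "sqrt2_conj x y \<Longrightarrow> Phi x = y"
  unfolding Phi_def sqrt2_conj_def by (rule the_equality) (auto simp: of_rat_sqrt_2_eq_iff)

lemma sqrt2_conj_of_rat: "sqrt2_conj (of_rat a) (of_rat a)"
  unfolding sqrt2_conj_def by (rule exI[of _ a], rule exI[of _ 0]) simp

lemma sqrt2_conj_sqrt_2: "sqrt2_conj (sqrt 2) (- sqrt 2)"
  unfolding sqrt2_conj_def by (rule exI[of _ 0], rule exI[of _ 1]) simp

lemma sqrt2_conj_add: "sqrt2_conj x y \<Longrightarrow> sqrt2_conj x' y' \<Longrightarrow> sqrt2_conj (x + x') (y + y')"
proof -
  assume "sqrt2_conj x y" "sqrt2_conj x' y'"
  then obtain a b a' b' where
    xy: "x = of_rat a + of_rat b * sqrt 2" "y = of_rat a - of_rat b * sqrt 2" and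
    xy': "x' = of_rat a' + of_rat b' * sqrt 2" "y' = of_rat a' - of_rat b' * sqrt 2"
    unfolding sqrt2_conj_def by blast
  show ?thesis unfolding sqrt2_conj_def xy xy'
    by (rule exI[of _ "a + a'"], rule exI[of _ "b + b'"]) (simp add: of_rat_add algebra_simps)
qed

lemma sqrt2_conj_mult: "sqrt2_conj x y \<Longrightarrow> sqrt2_conj x' y' \<Longrightarrow> sqrt2_conj (x * x') (y * y')"
proof -
  assume "sqrt2_conj x y" "sqrt2_conj x' y'"
  then obtain a b a' b' where
    xy: "x = of_rat a + of_rat b * sqrt 2" "y = of_rat a - of_rat b * sqrt 2" and
    xy': "x' = of_rat a' + of_rat b' * sqrt 2" "y' = of_rat a' - of_rat b' * sqrt 2"
    unfolding sqrt2_conj_def by blast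
  have s: "sqrt 2 * sqrt 2 = (2::real)" by simp
  show ?thesis unfolding sqrt2_conj_def xy xy'
    by (rule exI[of _ "a * a' + 2 * b * b'"], rule exI[of _ "a * b' + b * a'"])
       (simp add: of_rat_add of_rat_mult algebra_simps s)
qed

lemma sqrt2_conj_power: "sqrt2_conj x y \<Longrightarrow> sqrt2_conj (x ^ k) (y ^ k)"
  using sqrt2_conj_of_rat[of 1] by (induction k) (auto intro: sqrt2_conj_mult)

lemma sqrt2_conj_sum:
  "(\<And>u. u \<in> A \<Longrightarrow> sqrt2_conj (f u) (g u)) \<Longrightarrow> sqrt2_conj (sum f A) (sum g A)"
  using sqrt2_conj_of_rat[of 0]
  by (induction A rule: infinite_finite_induct) (auto intro: sqrt2_conj_add)

lemma sqrt2_conj_rho: "sqrt2_conj rho (- sqrt 2 - 1)"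
  using sqrt2_conj_add[OF sqrt2_conj_sqrt_2 sqrt2_conj_of_rat[of "-1"]]
  by (simp add: rho_def of_rat_minus)

lemma Phi_Wder: "Phi (Wder C t v) = (\<Sum>u\<in>bvecs t. (- sqrt 2 - 1) ^ wt u * W C (u @ v))"
  unfolding Wder_def
  by (intro Phi_eqI sqrt2_conj_sum sqrt2_conj_mult sqrt2_conj_power sqrt2_conj_rho)
     (simp add: W_def sqrt2_conj_of_rat[of 0, simplified] sqrt2_conj_of_rat[of 1, simplified])

lemma power_diff_eq_if_mult_eq_neg_one:
  fixes x y :: "'a :: comm_ring_1"
  assumes "x * y = -1" and "k \<le> t"
  shows "x ^ (t - k) = (-1) ^ k * x ^ t * y ^ k"
proof -
  have "x ^ t = x ^ (t - k) * x ^ k"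
    using \<open>k \<le> t\<close> by (simp add: power_add[symmetric])
  hence "(-1) ^ k * x ^ t * y ^ k = x ^ (t - k) * ((-1) ^ k * (x * y) ^ k)"
    by (simp add: power_mult_distrib algebra_simps)
  also have "\<dots> = x ^ (t - k)"
    by (simp add: assms(1) power_mult_distrib[symmetric])
  finally show ?thesis by simp
qed

lemma rho_mult_mu: "rho * (- sqrt 2 - 1) = -1"
  by (simp add: rho_def algebra_simps)

lemma wt_append [simp]: "wt (u @ v) = wt u + wt v"
  by (simp add: wt_def)

lemma wt_map_Not: "wt (map Not u) = length u - wt u"
  by (induction u) (auto simp: wt_def Suc_diff_le)

lemma wt_le_length: "wt u \<le> length u"
  by (simp add: wt_def)

lemma self_dual_code_even_wt:
  assumes "self_dual_code n C" "c \<in> C"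
  shows "even (wt c)"
proof -
  have "c \<in> dual_code n C" using assms unfolding self_dual_code_def by blast
  hence "\<not> dotp c c" using assms(2) unfolding dual_code_def by blast
  moreover have "map2 (\<and>) c c = c" by (induction c) auto
  ultimately show ?thesis by (simp add: dotp_def wt_def)
qed

lemma self_dual_code_all_ones:
  assumes "self_dual_code n C"
  shows "replicate n True \<in> C"
proof -
  have len: "length c = n" if "c \<in> C" for c
    using assms that unfolding self_dual_code_def linear_code_def bvecs_def by auto
  have "\<not> dotp c (replicate n True)" if "c \<in> C" for c
  proof -
    have "map2 (\<and>) c (replicate n True) = c"
      using len[OF that] by (induction c arbitrary: n) (auto simp: Suc_length_conv)
    with self_dual_code_even_wt[OF assms that] show ?thesis by (simp add: dotp_def wt_def)
  qed
  hence "replicate n True \<in> dual_code n C" by (simp add: dual_code_def bvecs_def)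
  with assms show ?thesis unfolding self_dual_code_def by blast
qed

lemma self_dual_code_map_Not:
  assumes "self_dual_code n C" "c \<in> C"
  shows "map Not c \<in> C"
proof -
  have "length c = n"
    using assms unfolding self_dual_code_def linear_code_def bvecs_def by auto
  hence "map Not c = xorv (replicate n True) c"
    unfolding xorv_def by (induction c arbitrary: n) (auto simp: Suc_length_conv)
  with assms self_dual_code_all_ones[OF assms(1)] show ?thesis
    unfolding self_dual_code_def linear_code_def by metis
qed

lemma W_map_Not: "self_dual_code n C \<Longrightarrow> W C (map Not c) = W C c"
  using self_dual_code_map_Not[of n C c] self_dual_code_map_Not[of n C "map Not c"]
  by (auto simp: W_def comp_def)

lemma Wder_complement:
  assumes "self_dual_code n C"
  shows "Wder C t (True # map Not v) = (\<Sum>u\<in>bvecs t. rho ^ (t - wt u) * W C (u @ False # v))"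
proof -
  have "Wder C t (True # map Not v) = (\<Sum>u\<in>bvecs t. rho ^ wt u * W C (map Not u @ False # v))"
    unfolding Wder_def
    using W_map_Not[OF assms, of "map Not u @ False # v" for u] by (simp add: comp_def)
  also have "\<dots> = (\<Sum>u\<in>bvecs t. rho ^ (t - wt u) * W C (u @ False # v))"
    by (rule sum.reindex_bij_witness[of _ "map Not" "map Not"])
       (auto simp: bvecs_def comp_def wt_map_Not wt_le_length diff_diff_cancel)
  finally show ?thesis .
qed

lemma Wder_complement_term:
  assumes "self_dual_code n C" and "length u = t"
  shows "rho ^ (t - wt u) * W C (u @ False # v)
         = (-1) ^ wt v * rho ^ t * ((- sqrt 2 - 1) ^ wt u * W C (u @ False # v))"
proof (cases "u @ False # v \<in> C")
  case True
  hence "even (wt u + wt v)" using self_dual_code_even_wt[OF assms(1) True] by (simp add: wt_def)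
  hence "(-1::real) ^ wt v = (-1) ^ wt u"
    by (metis even_add neg_one_even_power neg_one_odd_power)
  moreover have "wt u \<le> t" using assms(2) wt_le_length[of u] by simp
  ultimately show ?thesis
    using power_diff_eq_if_mult_eq_neg_one[OF rho_mult_mu] by (simp add: W_def)
qed (simp add: W_def)

theorem mainTheorem3:
  fixes n :: nat and C :: "bool list set"
  assumes "self_dual_code n C"
  shows "\<forall>t. t < n \<longrightarrow> (\<forall>v\<in>bvecs (n - t - 1).
           Wder C t (True # map Not v) = (-1) ^ wt v * rho ^ t * Phi (Wder C t (False # v)))"
proof (intro allI impI ballI)
  fix t v
  have "Wder C t (True # map Not v) = (\<Sum>u\<in>bvecs t. rho ^ (t - wt u) * W C (u @ False # v))"
    by (rule Wder_complement[OF assms])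
  also have "\<dots> = (\<Sum>u\<in>bvecs t. (-1) ^ wt v * rho ^ t * ((- sqrt 2 - 1) ^ wt u * W C (u @ False # v)))"
    by (rule sum.cong) (auto simp: bvecs_def Wder_complement_term[OF assms])
  also have "\<dots> = (-1) ^ wt v * rho ^ t * Phi (Wder C t (False # v))"
    by (simp add: Phi_Wder sum_distrib_left)
  finally show "Wder C t (True # map Not v) = (-1) ^ wt v * rho ^ t * Phi (Wder C t (False # v))" .
qed

end
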